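(* Let $\mathcal{A}\in\mathbb{R}^{n_1\times n_2\times n_3}$, let $\tau>0$, $0<p\le 1$, $l=\min(n_1,n_2)$, and let $w\in\mathbb{R}^l$ satisfy $w_1\ge w_2\ge\cdots\ge w_l\ge 0$. Let $\Phi\in\mathbb{R}^{n_3\times r}$ be semi-orthogonal ($\Phi^\top\Phi=I_r$, $r\le n_3$), let $\Phi^c\in\mathbb{R}^{n_3\times(n_3-r)}$ be such that $\overline{\Phi}=[\Phi,\Phi^c]\in\mathbb{R}^{n_3\times n_3}$ satisfies $\overline{\Phi}^\top\overline{\Phi}=I$. Consider $$\min_{\mathcal{X}\in\mathbb{R}^{n_1\times n_2\times n_3}}\ \tau\|\mathcal{X}\|_{\Phi,w,S_p}^p+\tfrac12\|\mathcal{X}-\mathcal{A}\|_F^2 .$$ Then an optimal solution is $\mathcal{X}^*=(\mathcal{Z})_{\overline{\Phi}^\top}$, where $\mathcal{Z}\in\mathbb{R}^{n_1\times n_2\times n_3}$ is the tensor whose frontal slices are $Z^{(i)}=S_{\tau,w,p}\big(A_\Phi^{(i)}\big)$ for $i=1,\dots,r$ and $Z^{(r+j)}=A_{\Phi^c}^{(j)}$ for $j=1,\dots,n_3-r$.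
   Context: For a tensor $\mathcal{X}\in\mathbb{R}^{n_1\times n_2\times n_3}$, $X^{(k)}=\mathcal{X}_{(:,:,k)}$ denotes its $k$-th frontal slice. For a matrix $\Psi\in\mathbb{R}^{n_3\times s}$, the transformed tensor $\mathcal{X}_\Psi\in\mathbb{R}^{n_1\times n_2\times s}$ is the tensor with frontal slices $X_\Psi^{(i)}=\sum_{k=1}^{n_3}\Psi_{k i}X^{(k)}$, $i=1,\dots,s$ (i.e. each mode-3 fiber $x$ is mapped to $\Psi^\top x$). For a matrix $Y$, $\sigma_j(Y)$ denotes its $j$-th smallest singular value. The $\Phi$-transformed weighted Schatten-$p$ tensor norm is defined by $\|\mathcal{X}\|_{\Phi,w,S_p}^p=\sum_{i=1}^{r}\sum_{j=1}^{l}w_j\,\sigma_j\big(X_\Phi^{(i)}\big)^p$. For $\sigma\ge0$ and $c\ge0$ let $x_p(\sigma,c)$ denote a global minimizer of $\min_{x\ge 0}\tfrac12(x-\sigma)^2+c\,x^p$. For a matrix $Y\in\mathbb{R}^{n_1\times n_2}$ with singular value decomposition $Y=U_Y\Sigma_YV_Y^\top$, define $S_{\tau,w,p}(Y)=U_Y\,\mathrm{diag}(\gamma_1,\dots,\gamma_l)\,V_Y^\top$, where $\gamma_j=x_p(\sigma_j(Y),\tau w_j)$ replaces the singular value $\sigma_j(Y)$ (the $j$-th smallest) in $\Sigma_Y$. *)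

theory Defs
  imports Complex_Main
begin

text \<open>Conventions: indices are 0-based. A tensor in R^(n1 x n2 x n3) is a function
  X :: nat => nat => nat => real, entry X a b k with a < n1, b < n2, k < n3;
  the k-th frontal slice is (%a b. X a b k). A matrix in R^(m x n) is a function
  nat => nat => real, entry M a b with a < m, b < n. Values outside the index
  ranges are irrelevant (all sums are bounded).\<close>

type_synonym tensor = "nat \<Rightarrow> nat \<Rightarrow> nat \<Rightarrow> real"
type_synonym rmat = "nat \<Rightarrow> nat \<Rightarrow> real"

definition slice :: "tensor \<Rightarrow> nat \<Rightarrow> rmat" where
  "slice X k = (\<lambda>a b. X a b k)"

text \<open>Transformed tensor X_Psi for Psi in R^(n3 x s): slice i is sum_k Psi_{k i} X^(k).\<close>
definition transform :: "nat \<Rightarrow> rmat \<Rightarrow> tensor \<Rightarrow> tensor" where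
  "transform n3 Psi X = (\<lambda>a b i. \<Sum>k<n3. Psi k i * X a b k)"

text \<open>Thin SVD of Y in R^(m x n), l = min m n: Y = U diag(s) V^T with U (m x l),
  V (n x l) having orthonormal columns, and s nonnegative in ascending order
  (s j is the (j+1)-th smallest singular value).\<close>
definition is_svd :: "nat \<Rightarrow> nat \<Rightarrow> rmat \<Rightarrow> rmat \<Rightarrow> (nat \<Rightarrow> real) \<Rightarrow> rmat \<Rightarrow> bool" where
  "is_svd m n Y U s V \<longleftrightarrow>
     (\<forall>i<min m n. \<forall>j<min m n. (\<Sum>a<m. U a i * U a j) = (if i = j then 1 else 0)) \<and>
     (\<forall>i<min m n. \<forall>j<min m n. (\<Sum>b<n. V b i * V b j) = (if i = j then 1 else 0)) \<and>
     (\<forall>j<min m n. 0 \<le> s j) \<and>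
     (\<forall>i j. i \<le> j \<and> j < min m n \<longrightarrow> s i \<le> s j) \<and>
     (\<forall>a<m. \<forall>b<n. Y a b = (\<Sum>j<min m n. U a j * s j * V b j))"

text \<open>sing_val m n Y j = sigma_{j+1}(Y), the (j+1)-th smallest singular value.\<close>
definition sing_val :: "nat \<Rightarrow> nat \<Rightarrow> rmat \<Rightarrow> nat \<Rightarrow> real" where
  "sing_val m n Y = (SOME s. \<exists>U V. is_svd m n Y U s V)"

definition wsp_norm_pow :: "nat \<Rightarrow> nat \<Rightarrow> nat \<Rightarrow> nat \<Rightarrow> rmat \<Rightarrow> (nat \<Rightarrow> real) \<Rightarrow> real \<Rightarrow> tensor \<Rightarrow> real" where
  "wsp_norm_pow n1 n2 n3 r Phi w p X =
     (\<Sum>i<r. \<Sum>j<min n1 n2. w j * sing_val n1 n2 (slice (transform n3 Phi X) i) j powr p)"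

definition fro_sq :: "nat \<Rightarrow> nat \<Rightarrow> nat \<Rightarrow> tensor \<Rightarrow> real" where
  "fro_sq n1 n2 n3 X = (\<Sum>a<n1. \<Sum>b<n2. \<Sum>k<n3. (X a b k)\<^sup>2)"

definition is_xp_selection :: "real \<Rightarrow> (real \<Rightarrow> real \<Rightarrow> real) \<Rightarrow> bool" where
  "is_xp_selection p xp \<longleftrightarrow>
     (\<forall>\<sigma>\<ge>0. \<forall>c\<ge>0. 0 \<le> xp \<sigma> c \<and>
        (\<forall>x\<ge>0. (1/2) * (xp \<sigma> c - \<sigma>)\<^sup>2 + c * (xp \<sigma> c) powr p \<le> (1/2) * (x - \<sigma>)\<^sup>2 + c * x powr p))"

definition S_op :: "nat \<Rightarrow> nat \<Rightarrow> (real \<Rightarrow> real \<Rightarrow> real) \<Rightarrow> real \<Rightarrow> (nat \<Rightarrow> real) \<Rightarrow> rmat \<Rightarrow> (nat \<Rightarrow> real) \<Rightarrow> rmat \<Rightarrow> rmat" where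
  "S_op m n xp \<tau> w U s V = (\<lambda>a b. \<Sum>j<min m n. U a j * xp (s j) (\<tau> * w j) * V b j)"

definition phibar :: "nat \<Rightarrow> rmat \<Rightarrow> rmat \<Rightarrow> rmat" where
  "phibar r Phi Phic = (\<lambda>k i. if i < r then Phi k i else Phic k (i - r))"

definition mtranspose :: "rmat \<Rightarrow> rmat" where
  "mtranspose M = (\<lambda>i j. M j i)"

end

theory Submission
  imports Defs "Jordan_Normal_Form.Char_Poly"
begin

text \<open>
  Parseval's identity for the orthogonal matrix [Phi, Phic] splits the objective into one
  weighted Schatten-p proximal problem per slice of A_Phi, plus the distance from X_Phic to
  A_Phic, which X* makes zero. For a matrix B with singular values s, von Neumann's trace
  inequality gives |Y - B|^2 >= sum_j (sigma_j(Y) - s_j)^2, so the proximal objective of Y is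
  bounded below by sum_j (tau w_j t_j^p + (t_j - s_j)^2 / 2) with t = sigma(Y), and x_p
  minimises each term. S_{tau,w,p}(B) attains this bound: its singular values are the
  x_p(s_j, tau w_j) in some order, and sorting them can only lower the penalty because w is
  decreasing (rearrangement inequality).

  Von Neumann's inequality is Abel summation against the doubly substochastic matrix
  ((U^T U')_ij^2 + (V^T V')_ij^2) / 2. As singular values are defined by choice, the existence
  of an SVD is needed as well; it comes from the spectral theorem for Y^T Y.
\<close>

section \<open>Finite sums and orthonormal columns\<close>

lemma sum_swap_double:
  "(\<Sum>a\<in>A. \<Sum>b\<in>B. \<Sum>i\<in>I. \<Sum>j\<in>J. f a b i j) = (\<Sum>i\<in>I. \<Sum>j\<in>J. \<Sum>a\<in>A. \<Sum>b\<in>B. f a b i j)"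
proof -
  have "(\<Sum>a\<in>A. \<Sum>b\<in>B. \<Sum>i\<in>I. \<Sum>j\<in>J. f a b i j) = (\<Sum>a\<in>A. \<Sum>i\<in>I. \<Sum>b\<in>B. \<Sum>j\<in>J. f a b i j)"
    by (rule sum.cong[OF refl], rule sum.swap)
  also have "\<dots> = (\<Sum>i\<in>I. \<Sum>a\<in>A. \<Sum>j\<in>J. \<Sum>b\<in>B. f a b i j)"
    by (subst sum.swap) (rule sum.cong[OF refl], rule sum.cong[OF refl], rule sum.swap)
  also have "\<dots> = (\<Sum>i\<in>I. \<Sum>j\<in>J. \<Sum>a\<in>A. \<Sum>b\<in>B. f a b i j)"
    by (rule sum.cong[OF refl], rule sum.swap)
  finally show ?thesis .
qed

lemma sum_lessThan_split:
  fixes f :: "nat \<Rightarrow> 'a::comm_monoid_add"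
  assumes "t \<le> n"
  shows "(\<Sum>j<n. f j) = (\<Sum>j<t. f j) + (\<Sum>i<n - t. f (t + i))"
proof -
  have "(\<Sum>j<n. f j) = (\<Sum>j<t. f j) + (\<Sum>j\<in>{t..<n}. f j)"
    using assms by (metis lessThan_atLeast0 sum.atLeastLessThan_concat zero_le)
  also have "(\<Sum>j\<in>{t..<n}. f j) = (\<Sum>i<n - t. f (t + i))"
    by (simp add: sum.atLeastLessThan_shift_0[of _ t] lessThan_atLeast0 comp_def)
  finally show ?thesis .
qed

lemma sum_sq_normalize:
  fixes y :: "nat \<Rightarrow> real"
  assumes "0 < (\<Sum>a<m. y a * y a)"
  shows "(\<Sum>a<m. y a / sqrt (\<Sum>a<m. y a * y a) * (y a / sqrt (\<Sum>a<m. y a * y a))) = 1"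
  using assms by (simp add: sum_divide_distrib[symmetric])

definition orthonormal_cols :: "nat \<Rightarrow> nat set \<Rightarrow> rmat \<Rightarrow> bool" where
  "orthonormal_cols m J U \<longleftrightarrow>
     (\<forall>i\<in>J. \<forall>j\<in>J. (\<Sum>a<m. U a i * U a j) = (if i = j then 1 else 0))"

lemma sum_sq_identity_minus_projection:
  assumes fin: "finite J" and o: "orthonormal_cols m J U"
  shows "(\<Sum>a<m. \<Sum>b<m. ((if a = b then 1 else 0) - (\<Sum>j\<in>J. U a j * U b j))\<^sup>2)
         = real m - real (card J)"
proof -
  define P where "P a b = (\<Sum>j\<in>J. U a j * U b j)" for a b
  have sq: "((if a = b then 1 else 0) - P a b)\<^sup>2 =
      (if a = b then 1 else 0) - 2 * (if a = b then P a b else 0) + (P a b)\<^sup>2" for a b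
    by (simp add: power2_diff)
  have trace: "(\<Sum>a<m. P a a) = real (card J)"
  proof -
    have "(\<Sum>a<m. P a a) = (\<Sum>j\<in>J. \<Sum>a<m. U a j * U a j)"
      unfolding P_def by (rule sum.swap)
    also have "\<dots> = real (card J)" using o unfolding orthonormal_cols_def by simp
    finally show ?thesis .
  qed
  have frob: "(\<Sum>a<m. \<Sum>b<m. (P a b)\<^sup>2) = real (card J)"
  proof -
    have "(\<Sum>a<m. \<Sum>b<m. (P a b)\<^sup>2) =
       (\<Sum>a<m. \<Sum>b<m. \<Sum>i\<in>J. \<Sum>j\<in>J. (U a i * U a j) * (U b i * U b j))"
      unfolding P_def power2_eq_square sum_product by (simp add: algebra_simps)
    also have "\<dots> = (\<Sum>i\<in>J. \<Sum>j\<in>J. \<Sum>a<m. \<Sum>b<m. (U a i * U a j) * (U b i * U b j))"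
      by (rule sum_swap_double)
    also have "\<dots> = (\<Sum>i\<in>J. \<Sum>j\<in>J. (\<Sum>a<m. U a i * U a j) * (\<Sum>b<m. U b i * U b j))"
      by (simp add: sum_product)
    also have "\<dots> = (\<Sum>i\<in>J. \<Sum>j\<in>J. (if i = j then 1 else 0))"
      using o unfolding orthonormal_cols_def by (intro sum.cong refl) auto
    also have "\<dots> = real (card J)" using fin by simp
    finally show ?thesis .
  qed
  show ?thesis
    unfolding P_def[symmetric] sq
    by (simp add: sum_subtractf sum.distrib sum_distrib_left[symmetric] trace frob del: of_nat_sum)
qed

lemma orthonormal_cols_square_rows:
  assumes o: "orthonormal_cols m {..<m} U" and "a < m" and "b < m"
  shows "(\<Sum>j<m. U a j * U b j) = (if a = b then 1 else 0)"
proof -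
  have "(\<Sum>a<m. \<Sum>b<m. ((if a = b then 1 else 0) - (\<Sum>j<m. U a j * U b j))\<^sup>2) = 0"
    using sum_sq_identity_minus_projection[OF _ o] by simp
  hence "((if a = b then 1 else 0) - (\<Sum>j<m. U a j * U b j))\<^sup>2 = 0"
    using assms(2,3) by (simp add: sum_nonneg_eq_0_iff sum_nonneg)
  thus ?thesis by simp
qed

lemma orthonormal_basis_expansion:
  assumes o: "orthonormal_cols n {..<n} Q" and a: "a < n"
  shows "z a = (\<Sum>j<n. Q a j * (\<Sum>a'<n. Q a' j * z a'))"
proof -
  have "(\<Sum>j<n. Q a j * (\<Sum>a'<n. Q a' j * z a')) = (\<Sum>j<n. \<Sum>a'<n. Q a j * Q a' j * z a')"
    by (simp add: sum_distrib_left mult_ac)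
  also have "\<dots> = (\<Sum>a'<n. (\<Sum>j<n. Q a j * Q a' j) * z a')"
    by (subst sum.swap) (simp add: sum_distrib_right)
  also have "\<dots> = (\<Sum>a'<n. (if a' = a then z a else 0))"
    using orthonormal_cols_square_rows[OF o a] by (intro sum.cong refl) auto
  also have "\<dots> = z a" using a by simp
  finally show ?thesis by simp
qed

lemma orthonormal_basis_parseval:
  assumes o: "orthonormal_cols n {..<n} P"
  shows "(\<Sum>i<n. (\<Sum>k<n. P k i * x k)\<^sup>2) = (\<Sum>k<n. (x k)\<^sup>2)"
proof -
  have "(\<Sum>i<n. (\<Sum>k<n. P k i * x k)\<^sup>2) = (\<Sum>i<n. \<Sum>k<n. \<Sum>k'<n. x k * x k' * (P k i * P k' i))"
    by (simp add: power2_eq_square sum_product mult_ac)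
  also have "\<dots> = (\<Sum>k<n. \<Sum>k'<n. x k * x k' * (\<Sum>i<n. P k i * P k' i))"
    by (subst sum.swap, rule sum.cong[OF refl], subst sum.swap) (simp add: sum_distrib_left)
  also have "\<dots> = (\<Sum>k<n. \<Sum>k'<n. if k = k' then x k * x k else 0)"
    using orthonormal_cols_square_rows[OF o] by (intro sum.cong refl) auto
  also have "\<dots> = (\<Sum>k<n. (x k)\<^sup>2)" by (simp add: power2_eq_square)
  finally show ?thesis .
qed

lemma orthonormal_cols_bessel:
  assumes o: "orthonormal_cols m {..<t} U"
  shows "(\<Sum>j<t. (\<Sum>a<m. x a * U a j)\<^sup>2) \<le> (\<Sum>a<m. (x a)\<^sup>2)"
proof -
  define c where "c j = (\<Sum>a<m. x a * U a j)" for j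
  have cross: "(\<Sum>a<m. \<Sum>j<t. c j * (x a * U a j)) = (\<Sum>j<t. (c j)\<^sup>2)"
    unfolding c_def by (subst sum.swap) (simp add: sum_distrib_left power2_eq_square)
  have "(\<Sum>a<m. \<Sum>j<t. \<Sum>j'<t. c j * c j' * (U a j * U a j')) =
     (\<Sum>j<t. \<Sum>j'<t. c j * c j' * (\<Sum>a<m. U a j * U a j'))"
    by (subst sum.swap, rule sum.cong[OF refl], subst sum.swap) (simp add: sum_distrib_left)
  also have "\<dots> = (\<Sum>j<t. (c j)\<^sup>2)"
    using o unfolding orthonormal_cols_def
    by (simp add: power2_eq_square if_distrib[of "\<lambda>u. _ * u"] cong: if_cong)
  finally have quad: "(\<Sum>a<m. \<Sum>j<t. \<Sum>j'<t. c j * c j' * (U a j * U a j')) = (\<Sum>j<t. (c j)\<^sup>2)" .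
  have "0 \<le> (\<Sum>a<m. (x a - (\<Sum>j<t. c j * U a j))\<^sup>2)" by (intro sum_nonneg) auto
  also have "\<dots> = (\<Sum>a<m. (x a)\<^sup>2) - 2 * (\<Sum>a<m. \<Sum>j<t. c j * (x a * U a j))
      + (\<Sum>a<m. \<Sum>j<t. \<Sum>j'<t. c j * c j' * (U a j * U a j'))"
    by (simp add: power2_diff sum_subtractf sum.distrib sum_distrib_left sum_distrib_right
        power2_eq_square sum_product algebra_simps)
  finally show ?thesis using cross quad unfolding c_def by linarith
qed

lemma orthonormal_cols_insert:
  assumes o: "orthonormal_cols m J U" and t: "t \<notin> J"
    and g1: "(\<Sum>a<m. g a * g a) = 1" and g0: "\<forall>j\<in>J. (\<Sum>a<m. g a * U a j) = 0"
  shows "orthonormal_cols m (insert t J) (\<lambda>a j. if j = t then g a else U a j)"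
  unfolding orthonormal_cols_def
proof (intro ballI)
  fix i j assume i: "i \<in> insert t J" and j: "j \<in> insert t J"
  have "\<forall>j\<in>J. (\<Sum>a<m. U a j * g a) = 0" using g0 by (simp add: mult.commute)
  then show "(\<Sum>a<m. (if i = t then g a else U a i) * (if j = t then g a else U a j)) =
      (if i = j then 1 else 0)"
    using o t g1 g0 i j unfolding orthonormal_cols_def by (cases "i = t"; cases "j = t") auto
qed

lemma orthonormal_cols_unit_orthogonal:
  assumes fin: "finite J" and o: "orthonormal_cols m J U" and c: "card J < m"
  shows "\<exists>g. (\<Sum>a<m. g a * g a) = 1 \<and> (\<forall>j\<in>J. (\<Sum>a<m. g a * U a j) = 0)"
proof -
  define R where "R a b = (if a = b then 1 else 0) - (\<Sum>j\<in>J. U a j * U b j)" for a b :: nat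
  \<comment> \<open>some column of the projection \<open>R = I - U U\<^sup>T\<close> onto the complement is nonzero\<close>
  have "0 < (\<Sum>b<m. \<Sum>a<m. R a b * R a b)"
    using sum_sq_identity_minus_projection[OF fin o] c
    unfolding R_def power2_eq_square by (subst sum.swap) simp
  then obtain i where i: "i < m" and pos: "0 < (\<Sum>a<m. R a i * R a i)"
    by (metis (no_types, lifting) lessThan_iff not_less sum_nonpos)
  have orth: "(\<Sum>a<m. R a i * U a j) = 0" if j: "j \<in> J" for j
  proof -
    have "(\<Sum>a<m. R a i * U a j) =
        (\<Sum>a<m. (if a = i then 1 else 0) * U a j) - (\<Sum>a<m. (\<Sum>k\<in>J. U a k * U i k) * U a j)"
      unfolding R_def by (simp add: left_diff_distrib sum_subtractf)
    also have "(\<Sum>a<m. (if a = i then 1 else 0) * U a j) = U i j"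
      using i by (simp add: if_distrib[of "\<lambda>x. x * _"] cong: if_cong)
    also have "(\<Sum>a<m. (\<Sum>k\<in>J. U a k * U i k) * U a j) = (\<Sum>a<m. \<Sum>k\<in>J. U i k * (U a k * U a j))"
      by (simp add: sum_distrib_left sum_distrib_right mult_ac)
    also have "\<dots> = (\<Sum>k\<in>J. U i k * (\<Sum>a<m. U a k * U a j))"
      by (subst sum.swap) (simp add: sum_distrib_left)
    also have "\<dots> = (\<Sum>k\<in>J. (if k = j then U i k else 0))"
      using o j unfolding orthonormal_cols_def by (intro sum.cong refl) auto
    finally show ?thesis using fin i j by simp
  qed
  show ?thesis
    using sum_sq_normalize[OF pos] orth
    by (intro exI[of _ "\<lambda>a. R a i / sqrt (\<Sum>a<m. R a i * R a i)"])
       (simp add: sum_divide_distrib[symmetric])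
qed

lemma orthonormal_cols_extend:
  assumes finK: "finite K" and cK: "card K \<le> m" and "J \<subseteq> K" and "orthonormal_cols m J U"
  shows "\<exists>U'. orthonormal_cols m K U' \<and> (\<forall>j\<in>J. \<forall>a. U' a j = U a j)"
  using assms(3,4)
proof (induction "card (K - J)" arbitrary: J U)
  case 0
  hence "J = K" using finK by (simp add: Diff_eq_empty_iff subset_antisym)
  thus ?case using 0 by blast
next
  case (Suc d)
  obtain t where t: "t \<in> K" "t \<notin> J"
    using Suc(2) by (metis Diff_iff card_0_eq Zero_not_Suc ex_in_conv finite_Diff finK)
  have finJ: "finite J" using Suc(3) finK finite_subset by auto
  have "card J < card K" using Suc(3) t finK by (metis psubsetI psubset_card_mono)
  then obtain g where g: "(\<Sum>a<m. g a * g a) = 1" "\<forall>j\<in>J. (\<Sum>a<m. g a * U a j) = 0"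
    using orthonormal_cols_unit_orthogonal[OF finJ Suc(4)] cK by auto
  have "d = card (K - insert t J)"
    using Suc(2) t by (metis Diff_insert card_Diff_singleton diff_Suc_1 DiffI)
  moreover have "insert t J \<subseteq> K" using Suc(3) t by auto
  ultimately obtain U' where "orthonormal_cols m K U'"
      "\<forall>j\<in>insert t J. \<forall>a. U' a j = (if j = t then g a else U a j)"
    using Suc(1) orthonormal_cols_insert[OF Suc(4) t(2) g] by blast
  thus ?case using t by auto
qed

section \<open>Sums of rank-one matrices\<close>

definition udvt :: "nat \<Rightarrow> rmat \<Rightarrow> (nat \<Rightarrow> real) \<Rightarrow> rmat \<Rightarrow> rmat" where
  "udvt k U x V = (\<lambda>a b. \<Sum>j<k. U a j * x j * V b j)"

lemma is_svd_iff_udvt: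
  "is_svd m n Y U s V \<longleftrightarrow>
     orthonormal_cols m {..<min m n} U \<and> orthonormal_cols n {..<min m n} V \<and>
     (\<forall>j<min m n. 0 \<le> s j) \<and> (\<forall>i j. i \<le> j \<and> j < min m n \<longrightarrow> s i \<le> s j) \<and>
     (\<forall>a<m. \<forall>b<n. Y a b = udvt (min m n) U s V a b)"
  unfolding is_svd_def orthonormal_cols_def udvt_def by auto

lemma S_op_eq_udvt: "S_op m n xp \<tau> w U s V = udvt (min m n) U (\<lambda>j. xp (s j) (\<tau> * w j)) V"
  unfolding S_op_def udvt_def ..

lemma sum_product_scaled:
  "(c::'a::comm_semiring_1) * (sum f A * sum g B) = (\<Sum>a\<in>A. \<Sum>b\<in>B. c * (f a * g b))"
  unfolding sum_product by (simp add: sum_distrib_left)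

lemma udvt_inner:
  "(\<Sum>a<m. \<Sum>b<n. udvt k U x V a b * udvt k U' y V' a b) =
   (\<Sum>i<k. \<Sum>j<k. x i * y j * ((\<Sum>a<m. U a i * U' a j) * (\<Sum>b<n. V b i * V' b j)))"
proof -
  have "(\<Sum>a<m. \<Sum>b<n. udvt k U x V a b * udvt k U' y V' a b) =
     (\<Sum>a<m. \<Sum>b<n. \<Sum>i<k. \<Sum>j<k. x i * y j * ((U a i * U' a j) * (V b i * V' b j)))"
    unfolding udvt_def by (simp add: sum_product mult_ac)
  also have "\<dots> = (\<Sum>i<k. \<Sum>j<k. \<Sum>a<m. \<Sum>b<n. x i * y j * ((U a i * U' a j) * (V b i * V' b j)))"
    by (rule sum_swap_double)
  also have "\<dots> = (\<Sum>i<k. \<Sum>j<k. x i * y j * ((\<Sum>a<m. U a i * U' a j) * (\<Sum>b<n. V b i * V' b j)))"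
    by (simp only: sum_product_scaled)
  finally show ?thesis .
qed

lemma udvt_inner_orthonormal:
  assumes "orthonormal_cols m {..<k} U" and "orthonormal_cols n {..<k} V"
  shows "(\<Sum>a<m. \<Sum>b<n. udvt k U x V a b * udvt k U y V a b) = (\<Sum>i<k. x i * y i)"
  unfolding udvt_inner using assms unfolding orthonormal_cols_def
  by (simp add: if_distrib[of "\<lambda>u. _ * u"] cong: if_cong)

lemma udvt_diff: "udvt k U x V a b - udvt k U y V a b = udvt k U (\<lambda>j. x j - y j) V a b"
  unfolding udvt_def by (simp add: sum_subtractf[symmetric] algebra_simps)

lemma svd_sum_sq:
  assumes "is_svd m n X U x V"
  shows "(\<Sum>a<m. \<Sum>b<n. X a b * X a b) = (\<Sum>j<min m n. x j * x j)"
proof -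
  have "(\<Sum>a<m. \<Sum>b<n. X a b * X a b) =
      (\<Sum>a<m. \<Sum>b<n. udvt (min m n) U x V a b * udvt (min m n) U x V a b)"
    using assms unfolding is_svd_iff_udvt by (intro sum.cong refl) auto
  also have "\<dots> = (\<Sum>j<min m n. x j * x j)"
    using assms unfolding is_svd_iff_udvt by (intro udvt_inner_orthonormal) auto
  finally show ?thesis .
qed

section \<open>Abel summation against doubly substochastic matrices\<close>

definition increment :: "(nat \<Rightarrow> real) \<Rightarrow> nat \<Rightarrow> real" where
  "increment a q = (if q = 0 then a 0 else a q - a (q - 1))"

lemma sum_increments:
  assumes "i < k"
  shows "a i = (\<Sum>q<k. if q \<le> i then increment a q else 0)"
proof -
  have telescope: "(\<Sum>q\<le>i. increment a q) = a i" for i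
    by (induction i) (auto simp: sum.atMost_Suc increment_def)
  have "(\<Sum>q<k. if q \<le> i then increment a q else 0) = (\<Sum>q\<in>{q\<in>{..<k}. q \<le> i}. increment a q)"
    by (rule sum.inter_filter[symmetric]) (rule finite_lessThan)
  also have "{q\<in>{..<k}. q \<le> i} = {..i}" using assms by auto
  finally show ?thesis using telescope by simp
qed

lemma sum_increments_product:
  assumes "i < k" and "j < k"
  shows "a i * b j =
    (\<Sum>q<k. \<Sum>q'<k. if q \<le> i \<and> q' \<le> j then increment a q * increment b q' else 0)"
proof -
  have "a i * b j = (\<Sum>q<k. if q \<le> i then increment a q else 0) *
      (\<Sum>q'<k. if q' \<le> j then increment b q' else 0)"
    using sum_increments[OF assms(1), of a] sum_increments[OF assms(2), of b] by simp
  also have "\<dots> = (\<Sum>q<k. \<Sum>q'<k.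
      (if q \<le> i then increment a q else 0) * (if q' \<le> j then increment b q' else 0))"
    by (rule sum_product)
  also have "\<dots> = (\<Sum>q<k. \<Sum>q'<k. if q \<le> i \<and> q' \<le> j then increment a q * increment b q' else 0)"
    by (intro sum.cong refl) auto
  finally show ?thesis .
qed

lemma increment_nonneg:
  assumes "\<forall>i<k. 0 \<le> a i" and "\<forall>i j. i \<le> j \<and> j < k \<longrightarrow> a i \<le> a j" and "q < k"
  shows "0 \<le> increment a q"
  using assms unfolding increment_def by auto

lemma card_ge_lessThan: "(\<Sum>i<k. if c \<le> i then (1::real) else 0) = real (k - c)"
  by (induction k) (auto simp: Suc_diff_le)

definition doubly_substochastic :: "nat \<Rightarrow> rmat \<Rightarrow> bool" where
  "doubly_substochastic k P \<longleftrightarrow> (\<forall>i<k. \<forall>j<k. 0 \<le> P i j) \<and>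
     (\<forall>i<k. (\<Sum>j<k. P i j) \<le> 1) \<and> (\<forall>j<k. (\<Sum>i<k. P i j) \<le> 1)"

lemma doubly_substochastic_corner_mass:
  assumes P: "doubly_substochastic k P"
  shows "(\<Sum>i<k. \<Sum>j<k. if q \<le> i \<and> q' \<le> j then P i j else 0) \<le> real (k - max q q')"
proof -
  have P0: "0 \<le> P i j" if "i < k" "j < k" for i j
    using P that unfolding doubly_substochastic_def by auto
  have "(\<Sum>i<k. \<Sum>j<k. if q \<le> i \<and> q' \<le> j then P i j else 0)
      \<le> (\<Sum>i<k. if q \<le> i then (\<Sum>j<k. P i j) else 0)"
    using P0 by (intro sum_mono) (auto intro!: sum_mono)
  also have "\<dots> \<le> (\<Sum>i<k. if q \<le> i then 1 else 0)"
    using P unfolding doubly_substochastic_def by (intro sum_mono) auto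
  finally have rows: "(\<Sum>i<k. \<Sum>j<k. if q \<le> i \<and> q' \<le> j then P i j else 0) \<le> real (k - q)"
    by (simp add: card_ge_lessThan)
  have "(\<Sum>i<k. \<Sum>j<k. if q \<le> i \<and> q' \<le> j then P i j else 0)
      = (\<Sum>j<k. \<Sum>i<k. if q \<le> i \<and> q' \<le> j then P i j else 0)"
    by (rule sum.swap)
  also have "\<dots> \<le> (\<Sum>j<k. if q' \<le> j then (\<Sum>i<k. P i j) else 0)"
    using P0 by (intro sum_mono) (auto intro!: sum_mono)
  also have "\<dots> \<le> (\<Sum>j<k. if q' \<le> j then 1 else 0)"
    using P unfolding doubly_substochastic_def by (intro sum_mono) auto
  finally have cols: "(\<Sum>i<k. \<Sum>j<k. if q \<le> i \<and> q' \<le> j then P i j else 0) \<le> real (k - q')"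
    by (simp add: card_ge_lessThan)
  show ?thesis using rows cols by (simp add: max_def)
qed

text \<open>Writing \<open>a\<close> and \<open>b\<close> as sums of their nonnegative increments, the coefficient of
  \<open>increment a q * increment b q'\<close> is the mass of \<open>P\<close> in the corner \<open>i \<ge> q, j \<ge> q'\<close> on
  the left and the size \<open>k - max q q'\<close> of the diagonal of that corner on the right.\<close>

lemma doubly_substochastic_sum_le:
  fixes a b :: "nat \<Rightarrow> real"
  assumes a0: "\<forall>i<k. 0 \<le> a i" and a_mono: "\<forall>i j. i \<le> j \<and> j < k \<longrightarrow> a i \<le> a j"
    and b0: "\<forall>i<k. 0 \<le> b i" and b_mono: "\<forall>i j. i \<le> j \<and> j < k \<longrightarrow> b i \<le> b j"
    and P: "doubly_substochastic k P"
  shows "(\<Sum>i<k. \<Sum>j<k. a i * b j * P i j) \<le> (\<Sum>i<k. a i * b i)"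
proof -
  define da where "da = increment a"
  define db where "db = increment b"
  define T where "T q q' = (\<Sum>i<k. \<Sum>j<k. if q \<le> i \<and> q' \<le> j then P i j else 0)" for q q'
  have expand: "a i * b j = (\<Sum>q<k. \<Sum>q'<k. if q \<le> i \<and> q' \<le> j then da q * db q' else 0)"
    if "i < k" "j < k" for i j
    unfolding da_def db_def by (rule sum_increments_product[OF that])
  have "(\<Sum>i<k. \<Sum>j<k. a i * b j * P i j) = (\<Sum>q<k. \<Sum>q'<k. da q * db q' * T q q')"
  proof -
    have "(\<Sum>i<k. \<Sum>j<k. a i * b j * P i j) =
        (\<Sum>i<k. \<Sum>j<k. \<Sum>q<k. \<Sum>q'<k. if q \<le> i \<and> q' \<le> j then da q * db q' * P i j else 0)"
      using expand by (intro sum.cong refl) (auto simp: sum_distrib_right intro!: sum.cong)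
    also have "\<dots> = (\<Sum>q<k. \<Sum>q'<k. \<Sum>i<k. \<Sum>j<k. if q \<le> i \<and> q' \<le> j then da q * db q' * P i j else 0)"
      by (rule sum_swap_double)
    also have "\<dots> = (\<Sum>q<k. \<Sum>q'<k. da q * db q' * T q q')"
      unfolding T_def by (intro sum.cong refl) (auto simp: sum_distrib_left intro!: sum.cong)
    finally show ?thesis .
  qed
  also have "\<dots> \<le> (\<Sum>q<k. \<Sum>q'<k. da q * db q' * real (k - max q q'))"
    using increment_nonneg[OF a0 a_mono] increment_nonneg[OF b0 b_mono]
      doubly_substochastic_corner_mass[OF P]
    unfolding da_def db_def T_def by (intro sum_mono mult_left_mono) (auto simp del: of_nat_diff)
  also have "\<dots> = (\<Sum>i<k. a i * b i)"
  proof -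
    have "(\<Sum>i<k. a i * b i) = (\<Sum>i<k. \<Sum>q<k. \<Sum>q'<k. if max q q' \<le> i then da q * db q' else 0)"
      using expand by (intro sum.cong refl) simp
    also have "\<dots> = (\<Sum>q<k. \<Sum>q'<k. \<Sum>i<k. if max q q' \<le> i then da q * db q' else 0)"
      by (subst sum.swap) (rule sum.cong[OF refl], rule sum.swap)
    also have "\<dots> = (\<Sum>q<k. \<Sum>q'<k. da q * db q' * (\<Sum>i<k. if max q q' \<le> i then 1 else 0))"
      by (intro sum.cong refl) (auto simp: sum_distrib_left intro!: sum.cong)
    finally show ?thesis by (simp only: card_ge_lessThan)
  qed
  finally show ?thesis .
qed

lemma permutation_doubly_substochastic:
  assumes \<pi>: "bij_betw \<pi> {..<k} {..<k}"
  shows "doubly_substochastic k (\<lambda>i j. if i = \<pi> j then 1 else 0)"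
proof -
  have "(\<Sum>j<k. if i = \<pi> j then 1 else 0) = (1::real)" if "i < k" for i
    using sum.reindex_bij_betw[OF \<pi>, of "\<lambda>j. if i = j then 1 else (0::real)"] that by simp
  moreover have "\<pi> j < k" if "j < k" for j using \<pi> that by (auto simp: bij_betw_def)
  ultimately show ?thesis unfolding doubly_substochastic_def by auto
qed

text \<open>Abel summation for the increasing sequences \<open>w 0 - w i\<close> and \<open>h (\<pi> j)\<close> against the
  permutation matrix of \<open>\<pi>\<close>.\<close>

lemma rearrangement_antitone_le:
  fixes w h :: "nat \<Rightarrow> real"
  assumes w_mono: "\<forall>i j. i \<le> j \<and> j < k \<longrightarrow> w j \<le> w i"
    and h0: "\<forall>j<k. 0 \<le> h j"
    and \<pi>: "bij_betw \<pi> {..<k} {..<k}"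
    and h_mono: "\<forall>i j. i \<le> j \<and> j < k \<longrightarrow> h (\<pi> i) \<le> h (\<pi> j)"
  shows "(\<Sum>j<k. w j * h (\<pi> j)) \<le> (\<Sum>j<k. w j * h j)"
proof -
  have \<pi>k: "\<pi> j < k" if "j < k" for j using \<pi> that by (auto simp: bij_betw_def)
  have reindex: "(\<Sum>j<k. g (\<pi> j)) = (\<Sum>j<k. g j)" for g :: "nat \<Rightarrow> real"
    by (rule sum.reindex_bij_betw[OF \<pi>])
  have "(\<Sum>j<k. (w 0 - w j) * h j) = (\<Sum>j<k. (w 0 - w (\<pi> j)) * h (\<pi> j))"
    by (rule reindex[symmetric])
  also have "\<dots> = (\<Sum>j<k. \<Sum>i<k. (w 0 - w i) * h (\<pi> j) * (if i = \<pi> j then 1 else 0))"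
    using \<pi>k by (intro sum.cong refl) (simp add: if_distrib[of "\<lambda>u. _ * u"] cong: if_cong)
  also have "\<dots> = (\<Sum>i<k. \<Sum>j<k. (w 0 - w i) * h (\<pi> j) * (if i = \<pi> j then 1 else 0))"
    by (rule sum.swap)
  also have "\<dots> \<le> (\<Sum>j<k. (w 0 - w j) * h (\<pi> j))"
    using w_mono h0 h_mono \<pi>k
    by (intro doubly_substochastic_sum_le permutation_doubly_substochastic[OF \<pi>]) auto
  finally have "(\<Sum>j<k. (w 0 - w j) * h j) \<le> (\<Sum>j<k. (w 0 - w j) * h (\<pi> j))" .
  with reindex[of h] show ?thesis
    by (simp add: left_diff_distrib sum_subtractf sum_distrib_left[symmetric])
qed

section \<open>Von Neumann's trace inequality\<close>

lemma orthonormal_cols_cross_bessel: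
  assumes U: "orthonormal_cols m {..<k} U" and U': "orthonormal_cols m {..<k} U'" and i: "i < k"
  shows "(\<Sum>j<k. (\<Sum>a<m. U a i * U' a j)\<^sup>2) \<le> 1"
proof -
  have "(\<Sum>j<k. (\<Sum>a<m. U a i * U' a j)\<^sup>2) \<le> (\<Sum>a<m. (U a i)\<^sup>2)"
    by (rule orthonormal_cols_bessel[OF U'])
  also have "\<dots> = 1" using U i unfolding orthonormal_cols_def by (simp add: power2_eq_square)
  finally show ?thesis .
qed

lemma cross_gram_doubly_substochastic:
  assumes U: "orthonormal_cols m {..<k} U" and U': "orthonormal_cols m {..<k} U'"
    and V: "orthonormal_cols n {..<k} V" and V': "orthonormal_cols n {..<k} V'"
  shows "doubly_substochastic k
    (\<lambda>i j. ((\<Sum>a<m. U a i * U' a j)\<^sup>2 + (\<Sum>b<n. V b i * V' b j)\<^sup>2) / 2)"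
proof -
  have half: "(\<Sum>j\<in>J. (f j + g j) / 2) \<le> 1" if "sum f J \<le> 1" "sum g J \<le> 1"
    for J and f g :: "nat \<Rightarrow> real"
    using that by (simp add: sum_divide_distrib[symmetric] sum.distrib)
  have "(\<Sum>i<k. (\<Sum>a<m. U a i * U' a j)\<^sup>2) \<le> 1" "(\<Sum>i<k. (\<Sum>b<n. V b i * V' b j)\<^sup>2) \<le> 1"
    if "j < k" for j
    using orthonormal_cols_cross_bessel[OF U' U that] orthonormal_cols_cross_bessel[OF V' V that]
    by (simp_all add: mult.commute)
  with orthonormal_cols_cross_bessel[OF U U'] orthonormal_cols_cross_bessel[OF V V']
  show ?thesis unfolding doubly_substochastic_def by (auto intro!: half)
qed

theorem von_neumann_trace_inequality:
  assumes X: "is_svd m n X U x V" and Y: "is_svd m n Y U' y V'"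
  shows "(\<Sum>a<m. \<Sum>b<n. X a b * Y a b) \<le> (\<Sum>j<min m n. x j * y j)"
proof -
  define k where "k = min m n"
  define c where "c i j = (\<Sum>a<m. U a i * U' a j)" for i j
  define d where "d i j = (\<Sum>b<n. V b i * V' b j)" for i j
  note X' = X[unfolded is_svd_iff_udvt k_def[symmetric]]
  note Y' = Y[unfolded is_svd_iff_udvt k_def[symmetric]]
  have amgm: "u * v \<le> (u\<^sup>2 + v\<^sup>2) / 2" for u v :: real
    using sum_squares_bound[of u v] by simp
  have "(\<Sum>a<m. \<Sum>b<n. X a b * Y a b) = (\<Sum>a<m. \<Sum>b<n. udvt k U x V a b * udvt k U' y V' a b)"
    using X' Y' by (intro sum.cong refl) auto
  also have "\<dots> = (\<Sum>i<k. \<Sum>j<k. x i * y j * (c i j * d i j))"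
    unfolding udvt_inner c_def d_def ..
  also have "\<dots> \<le> (\<Sum>i<k. \<Sum>j<k. x i * y j * (((c i j)\<^sup>2 + (d i j)\<^sup>2) / 2))"
    using X' Y' amgm by (intro sum_mono mult_left_mono) auto
  also have "\<dots> \<le> (\<Sum>i<k. x i * y i)"
    using X' Y' unfolding c_def d_def
    by (intro doubly_substochastic_sum_le cross_gram_doubly_substochastic) auto
  finally show ?thesis unfolding k_def .
qed

lemma svd_sum_sq_diff_le:
  assumes X: "is_svd m n X U x V" and Y: "is_svd m n Y U' y V'"
  shows "(\<Sum>j<min m n. (x j - y j)\<^sup>2) \<le> (\<Sum>a<m. \<Sum>b<n. (X a b - Y a b)\<^sup>2)"
proof -
  have expand: "(\<Sum>i\<in>I. (f i - g i)\<^sup>2) =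
      (\<Sum>i\<in>I. f i * f i) - 2 * (\<Sum>i\<in>I. f i * g i) + (\<Sum>i\<in>I. g i * g i)"
    for I and f g :: "nat \<Rightarrow> real"
  proof -
    have "(\<Sum>i\<in>I. (f i - g i)\<^sup>2) = (\<Sum>i\<in>I. f i * f i - 2 * (f i * g i) + g i * g i)"
      by (intro sum.cong refl) (simp add: power2_eq_square algebra_simps)
    then show ?thesis by (simp add: sum.distrib sum_subtractf sum_distrib_left)
  qed
  have "(\<Sum>a<m. \<Sum>b<n. (X a b - Y a b)\<^sup>2) = (\<Sum>a<m. \<Sum>b<n. X a b * X a b)
      - 2 * (\<Sum>a<m. \<Sum>b<n. X a b * Y a b) + (\<Sum>a<m. \<Sum>b<n. Y a b * Y a b)"
    by (simp add: expand sum.distrib sum_subtractf sum_distrib_left)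
  then show ?thesis
    using expand[where I = "{..<min m n}" and f = x and g = y] svd_sum_sq[OF X] svd_sum_sq[OF Y] von_neumann_trace_inequality[OF X Y]
    by linarith
qed

section \<open>Spectral theorem and existence of singular value decompositions\<close>

lemma complex_eigenvector_exists:
  fixes C :: rmat
  assumes "0 < d"
  shows "\<exists>v e. (\<exists>i<d. v i \<noteq> 0) \<and> (\<forall>i<d. (\<Sum>j<d. complex_of_real (C i j) * v j) = e * v i)"
proof -
  define Cc where "Cc = mat d d (\<lambda>(i, j). complex_of_real (C i j))"
  have Cc: "Cc \<in> carrier_mat d d" unfolding Cc_def by simp
  obtain es where es: "char_poly Cc = (\<Prod>a\<leftarrow>es. [:- a, 1:])" "length es = d"
    using char_poly_factorized[OF Cc] by blast
  then obtain e es' where "es = e # es'" using assms by (cases es) auto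
  hence "eigenvalue Cc e" using eigenvalue_root_char_poly[OF Cc] es(1) by simp
  then obtain v where "eigenvector Cc v e" unfolding eigenvalue_def by blast
  hence v: "v \<in> carrier_vec d" and v0: "v \<noteq> 0\<^sub>v d" and ev: "Cc *\<^sub>v v = e \<cdot>\<^sub>v v"
    using Cc unfolding eigenvector_def by auto
  have "(\<Sum>j<d. complex_of_real (C i j) * v $ j) = e * v $ i" if i: "i < d" for i
  proof -
    have "(Cc *\<^sub>v v) $ i = e * v $ i" using ev i v by (metis carrier_vecD index_smult_vec(1))
    moreover have "(Cc *\<^sub>v v) $ i = (\<Sum>j<d. complex_of_real (C i j) * v $ j)"
      using i v unfolding Cc_def by (simp add: scalar_prod_def atLeast0LessThan)
    ultimately show ?thesis by simp
  qed
  moreover obtain i where "i < d" "v $ i \<noteq> 0" using v0 v by (auto simp: vec_eq_iff)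
  ultimately show ?thesis by (intro exI[of _ "\<lambda>j. v $ j"] exI[of _ e]) auto
qed

lemma symmetric_real_eigenvector:
  fixes C :: rmat
  assumes d: "0 < d" and sym: "\<forall>i<d. \<forall>j<d. C i j = C j i"
  shows "\<exists>x \<mu>. (\<exists>i<d. x i \<noteq> 0) \<and> (\<forall>i<d. (\<Sum>j<d. C i j * x j) = \<mu> * x i)"
proof -
  obtain v e where v: "\<exists>i<d. v i \<noteq> 0"
    and ev: "\<forall>i<d. (\<Sum>j<d. complex_of_real (C i j) * v j) = e * v i"
    using complex_eigenvector_exists[OF d] by blast
  define x where "x j = Re (v j)" for j
  define y where "y j = Im (v j)" for j
  have Cx: "(\<Sum>j<d. C i j * x j) = Re e * x i - Im e * y i" if "i < d" for i
    using arg_cong[OF ev[rule_format, OF that], of Re] unfolding x_def y_def by (simp add: Re_sum)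
  have Cy: "(\<Sum>j<d. C i j * y j) = Im e * x i + Re e * y i" if "i < d" for i
    using arg_cong[OF ev[rule_format, OF that], of Im] unfolding x_def y_def by (simp add: Im_sum)
  have "(\<Sum>i<d. x i * (\<Sum>j<d. C i j * y j)) = (\<Sum>j<d. \<Sum>i<d. x i * C i j * y j)"
    by (subst sum.swap) (simp add: sum_distrib_left mult_ac)
  also have "\<dots> = (\<Sum>i<d. y i * (\<Sum>j<d. C i j * x j))"
    using sym by (simp add: sum_distrib_left mult_ac)
  finally have "(\<Sum>i<d. x i * (Im e * x i + Re e * y i)) = (\<Sum>i<d. y i * (Re e * x i - Im e * y i))"
    using Cx Cy by simp
  hence "Im e * (\<Sum>i<d. (x i)\<^sup>2 + (y i)\<^sup>2) = 0"
    by (simp add: algebra_simps sum.distrib sum_subtractf sum_distrib_left power2_eq_square)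
  moreover obtain i0 where i0: "i0 < d" "x i0 \<noteq> 0 \<or> y i0 \<noteq> 0"
    using v unfolding x_def y_def by (auto simp: complex_eq_iff)
  moreover have "0 < (\<Sum>i<d. (x i)\<^sup>2 + (y i)\<^sup>2)"
    using i0 by (intro sum_pos2[of _ i0]) (auto simp: sum_power2_gt_zero_iff)
  ultimately have "Im e = 0" by simp
  show ?thesis
  proof (cases "x i0 = 0")
    case False
    then show ?thesis using Cx \<open>Im e = 0\<close> i0(1) by (intro exI[of _ x] exI[of _ "Re e"]) auto
  next
    case True
    then show ?thesis using Cy \<open>Im e = 0\<close> i0 by (intro exI[of _ y] exI[of _ "Re e"]) auto
  qed
qed

lemma orthonormal_cols_combination_sum_sq:
  assumes "orthonormal_cols n {..<d} W"
  shows "(\<Sum>a<n. (\<Sum>i<d. W a i * c i) * (\<Sum>i<d. W a i * c i)) = (\<Sum>i<d. c i * c i)"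
proof -
  have "(\<Sum>a<n. (\<Sum>i<d. W a i * c i) * (\<Sum>i<d. W a i * c i)) =
      (\<Sum>a<n. \<Sum>i<d. \<Sum>i'<d. c i * c i' * (W a i * W a i'))"
    by (simp add: sum_product mult_ac)
  also have "\<dots> = (\<Sum>i<d. \<Sum>i'<d. \<Sum>a<n. c i * c i' * (W a i * W a i'))"
    by (subst sum.swap) (rule sum.cong[OF refl], rule sum.swap)
  also have "\<dots> = (\<Sum>i<d. \<Sum>i'<d. c i * c i' * (\<Sum>a<n. W a i * W a i'))"
    by (simp add: sum_distrib_left)
  also have "\<dots> = (\<Sum>i<d. c i * c i)"
    using assms unfolding orthonormal_cols_def by (simp add: if_distrib[of "\<lambda>u. _ * u"] cong: if_cong)
  finally show ?thesis .
qed

lemma symmetric_eigen_complement_invariant: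
  assumes sym: "\<forall>a<n. \<forall>b<n. M a b = M b a" and Q: "orthonormal_cols n {..<n} Q"
    and eig: "\<forall>j<t. \<forall>a<n. (\<Sum>b<n. M a b * Q b j) = lam j * Q a j"
    and t: "t \<le> i" "i < n" and a: "a < n"
  shows "(\<Sum>b<n. M a b * Q b i) =
    (\<Sum>i'<n - t. Q a (t + i') * (\<Sum>a'<n. \<Sum>b<n. Q a' (t + i') * M a' b * Q b i))"
proof -
  define z where "z a = (\<Sum>b<n. M a b * Q b i)" for a
  have coeff: "(\<Sum>a'<n. Q a' j * z a') = (\<Sum>a'<n. \<Sum>b<n. Q a' j * M a' b * Q b i)" for j
    unfolding z_def by (simp add: sum_distrib_left mult_ac)
  have low: "(\<Sum>a'<n. Q a' j * z a') = 0" if j: "j < t" for j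
  proof -
    have "(\<Sum>a'<n. Q a' j * z a') = (\<Sum>b<n. \<Sum>a'<n. Q a' j * M a' b * Q b i)"
      unfolding coeff by (rule sum.swap)
    also have "\<dots> = (\<Sum>b<n. (\<Sum>a'<n. M b a' * Q a' j) * Q b i)"
      using sym by (intro sum.cong refl) (auto simp: sum_distrib_left sum_distrib_right mult_ac intro!: sum.cong)
    also have "\<dots> = lam j * (\<Sum>b<n. Q b j * Q b i)"
      using eig j by (simp add: sum_distrib_left mult_ac)
    also have "\<dots> = 0" using Q j t unfolding orthonormal_cols_def by auto
    finally show ?thesis .
  qed
  have "z a = (\<Sum>j<n. Q a j * (\<Sum>a'<n. Q a' j * z a'))" by (rule orthonormal_basis_expansion[OF Q a])
  also have "\<dots> = (\<Sum>j<t. Q a j * (\<Sum>a'<n. Q a' j * z a'))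
      + (\<Sum>i'<n - t. Q a (t + i') * (\<Sum>a'<n. Q a' (t + i') * z a'))"
    using t by (intro sum_lessThan_split) simp
  also have "(\<Sum>j<t. Q a j * (\<Sum>a'<n. Q a' j * z a')) = 0" using low by simp
  finally show ?thesis by (simp only: coeff) (simp add: z_def)
qed

lemma restricted_eigenvector_lift:
  fixes M W C :: rmat and c :: "nat \<Rightarrow> real"
  assumes MW: "\<And>a i. a < n \<Longrightarrow> i < d \<Longrightarrow> (\<Sum>b<n. M a b * W b i) = (\<Sum>i'<d. W a i' * C i' i)"
    and c: "\<forall>i<d. (\<Sum>j<d. C i j * c j) = \<mu> * c i" and a: "a < n"
  shows "(\<Sum>b<n. M a b * (\<Sum>i<d. W b i * c i)) = \<mu> * (\<Sum>i<d. W a i * c i)"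
proof -
  have "(\<Sum>b<n. M a b * (\<Sum>i<d. W b i * c i)) = (\<Sum>b<n. \<Sum>i<d. M a b * W b i * c i)"
    by (simp add: sum_distrib_left mult.assoc)
  also have "\<dots> = (\<Sum>i<d. (\<Sum>b<n. M a b * W b i) * c i)"
    by (subst sum.swap) (simp add: sum_distrib_right)
  also have "\<dots> = (\<Sum>i<d. \<Sum>i'<d. W a i' * (C i' i * c i))"
    using MW a by (simp add: sum_distrib_right sum_distrib_left mult_ac)
  also have "\<dots> = (\<Sum>i'<d. W a i' * (\<mu> * c i'))"
    using c by (subst sum.swap) (simp add: sum_distrib_left[symmetric])
  also have "\<dots> = \<mu> * (\<Sum>i<d. W a i * c i)" by (simp add: sum_distrib_left mult_ac)
  finally show ?thesis .
qed

lemma symmetric_eigenvector_orthogonal: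
  assumes sym: "\<forall>a<n. \<forall>b<n. M a b = M b a" and t: "t < n" and Q: "orthonormal_cols n {..<t} Q"
    and eig: "\<forall>j<t. \<forall>a<n. (\<Sum>b<n. M a b * Q b j) = lam j * Q a j"
  shows "\<exists>q \<mu>. (\<Sum>a<n. q a * q a) = 1 \<and> (\<forall>j<t. (\<Sum>a<n. q a * Q a j) = 0) \<and>
               (\<forall>a<n. (\<Sum>b<n. M a b * q b) = \<mu> * q a)"
proof -
  obtain Q' where Q': "orthonormal_cols n {..<n} Q'" and agree: "\<forall>j\<in>{..<t}. \<forall>a. Q' a j = Q a j"
    using orthonormal_cols_extend[of "{..<n}" n "{..<t}" Q] Q t by auto
  define d where "d = n - t"
  define W where "W a i = Q' a (t + i)" for a i
  define C where "C i i' = (\<Sum>a<n. \<Sum>b<n. W a i * M a b * W b i')" for i i'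
  have W: "orthonormal_cols n {..<d} W" using Q' unfolding orthonormal_cols_def W_def d_def by auto
  have C_sym: "\<forall>i<d. \<forall>j<d. C i j = C j i"
    unfolding C_def using sym by (subst sum.swap) (simp add: mult_ac)
  obtain c \<mu> where c: "\<exists>i<d. c i \<noteq> 0" and c_eig: "\<forall>i<d. (\<Sum>j<d. C i j * c j) = \<mu> * c i"
    using symmetric_real_eigenvector[OF _ C_sym] t unfolding d_def by auto
  define y where "y a = (\<Sum>i<d. W a i * c i)" for a
  have MW: "(\<Sum>b<n. M a b * W b i) = (\<Sum>i'<d. W a i' * C i' i)" if "a < n" "i < d" for a i
    using symmetric_eigen_complement_invariant[OF sym Q', of t lam "t + i" a] eig agree that
    unfolding W_def C_def d_def by (simp add: mult_ac)
  have My: "(\<Sum>b<n. M a b * y b) = \<mu> * y a" if "a < n" for a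
    unfolding y_def using MW c_eig that by (rule restricted_eigenvector_lift)
  have yQ: "(\<Sum>a<n. y a * Q a j) = 0" if j: "j < t" for j
  proof -
    have "(\<Sum>a<n. y a * Q a j) = (\<Sum>a<n. \<Sum>i<d. c i * (W a i * Q' a j))"
      unfolding y_def using agree j by (simp add: sum_distrib_left sum_distrib_right mult_ac)
    also have "\<dots> = (\<Sum>i<d. c i * (\<Sum>a<n. W a i * Q' a j))"
      by (subst sum.swap) (simp add: sum_distrib_left)
    also have "\<dots> = 0" using Q' j t unfolding W_def d_def orthonormal_cols_def by auto
    finally show ?thesis .
  qed
  obtain i0 where i0: "i0 < d" "c i0 \<noteq> 0" using c by blast
  have "0 < c i0 * c i0" using i0(2) not_real_square_gt_zero by blast
  then have "0 < (\<Sum>a<n. y a * y a)"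
    unfolding y_def orthonormal_cols_combination_sum_sq[OF W] using i0(1) by (intro sum_pos2) auto
  from sum_sq_normalize[OF this] show ?thesis
    using My yQ by (intro exI[of _ "\<lambda>a. y a / sqrt (\<Sum>a<n. y a * y a)"] exI[of _ \<mu>])
      (simp add: sum_divide_distrib[symmetric])
qed

lemma symmetric_orthonormal_eigenvectors:
  assumes sym: "\<forall>a<n. \<forall>b<n. M a b = M b a"
  shows "t \<le> n \<Longrightarrow> \<exists>Q lam. orthonormal_cols n {..<t} Q \<and>
    (\<forall>j<t. \<forall>a<n. (\<Sum>b<n. M a b * Q b j) = lam j * Q a j)"
proof (induction t)
  case 0
  show ?case unfolding orthonormal_cols_def by auto
next
  case (Suc t)
  then obtain Q lam where Q: "orthonormal_cols n {..<t} Q"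
    and eig: "\<forall>j<t. \<forall>a<n. (\<Sum>b<n. M a b * Q b j) = lam j * Q a j"
    by auto
  obtain q \<mu> where q: "(\<Sum>a<n. q a * q a) = 1" "\<forall>j<t. (\<Sum>a<n. q a * Q a j) = 0"
    and q_eig: "\<forall>a<n. (\<Sum>b<n. M a b * q b) = \<mu> * q a"
    using symmetric_eigenvector_orthogonal[OF sym _ Q eig] Suc(2) by auto
  have "orthonormal_cols n {..<Suc t} (\<lambda>a j. if j = t then q a else Q a j)"
    using orthonormal_cols_insert[OF Q _ q(1)] q(2) by (simp add: lessThan_Suc)
  moreover have "\<forall>j<Suc t. \<forall>a<n. (\<Sum>b<n. M a b * (if j = t then q b else Q b j)) =
      (lam(t := \<mu>)) j * (if j = t then q a else Q a j)"
    using eig q_eig by (auto simp: less_Suc_eq)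
  ultimately show ?case by blast
qed

lemma gram_eigenvectors_orthogonal:
  fixes Y :: rmat
  assumes Q: "orthonormal_cols n {..<n} Q"
    and eig: "\<forall>j<n. \<forall>b<n. (\<Sum>b'<n. (\<Sum>a<m. Y a b * Y a b') * Q b' j) = lam j * Q b j"
    and ij: "i < n" "j < n"
  shows "(\<Sum>a<m. (\<Sum>b<n. Y a b * Q b i) * (\<Sum>b<n. Y a b * Q b j)) = lam j * (if i = j then 1 else 0)"
proof -
  have "(\<Sum>a<m. (\<Sum>b<n. Y a b * Q b i) * (\<Sum>b<n. Y a b * Q b j)) =
      (\<Sum>a<m. \<Sum>b<n. \<Sum>b'<n. Q b i * (Y a b * Y a b') * Q b' j)"
    by (simp add: sum_product mult_ac)
  also have "\<dots> = (\<Sum>b<n. \<Sum>b'<n. \<Sum>a<m. Q b i * (Y a b * Y a b') * Q b' j)"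
    by (subst sum.swap) (rule sum.cong[OF refl], rule sum.swap)
  also have "\<dots> = (\<Sum>b<n. Q b i * (\<Sum>b'<n. (\<Sum>a<m. Y a b * Y a b') * Q b' j))"
    by (simp add: sum_distrib_left sum_distrib_right mult_ac)
  also have "\<dots> = lam j * (\<Sum>b<n. Q b i * Q b j)"
    using eig ij by (simp add: sum_distrib_left mult_ac)
  also have "\<dots> = lam j * (if i = j then 1 else 0)" using Q ij unfolding orthonormal_cols_def by auto
  finally show ?thesis .
qed

lemma orthogonal_vectors_normalize:
  fixes w :: "nat \<Rightarrow> nat \<Rightarrow> real"
  assumes nm: "n \<le> m"
    and ww: "\<And>i j. i < n \<Longrightarrow> j < n \<Longrightarrow> (\<Sum>a<m. w i a * w j a) = lam j * (if i = j then 1 else 0)"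
  shows "\<exists>U. orthonormal_cols m {..<n} U \<and> (\<forall>j<n. 0 \<le> lam j \<and> (\<forall>a<m. w j a = U a j * sqrt (lam j)))"
proof -
  have lam0: "0 \<le> lam j" if "j < n" for j
    using ww[OF that that] sum_nonneg[of "{..<m}" "\<lambda>a. w j a * w j a"] by simp
  \<comment> \<open>normalise the nonzero \<open>w\<^sub>j\<close> and complete them to an orthonormal family\<close>
  define J where "J = {j. j < n \<and> 0 < lam j}"
  define u where "u a j = w j a / sqrt (lam j)" for a j
  have "orthonormal_cols m J u" unfolding orthonormal_cols_def
  proof (intro ballI)
    fix i j assume "i \<in> J" "j \<in> J"
    then show "(\<Sum>a<m. u a i * u a j) = (if i = j then 1 else 0)"
      using ww[of i j] unfolding u_def J_def
      by (auto simp: sum_divide_distrib[symmetric] real_sqrt_mult[symmetric])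
  qed
  then obtain U where U: "orthonormal_cols m {..<n} U" and agree: "\<forall>j\<in>J. \<forall>a. U a j = u a j"
    using orthonormal_cols_extend[of "{..<n}" m J u] nm unfolding J_def by auto
  have "w j a = U a j * sqrt (lam j)" if j: "j < n" and a: "a < m" for j a
  proof (cases "j \<in> J")
    case True
    then show ?thesis using agree unfolding u_def J_def by simp
  next
    case False
    hence "lam j = 0" using lam0[OF j] j unfolding J_def by auto
    moreover from this have "w j a * w j a = 0"
      using ww[OF j j] a by (simp add: sum_nonneg_eq_0_iff)
    ultimately show ?thesis by simp
  qed
  with U lam0 show ?thesis by blast
qed

text \<open>With \<open>Q\<close> an orthonormal eigenbasis of \<open>Y\<^sup>T Y\<close>, the columns \<open>Y Q\<^sub>j\<close> are orthogonal, and
  \<open>Y = (Y Q) Q\<^sup>T\<close>.\<close>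

lemma svd_exists_tall:
  fixes Y :: rmat
  assumes nm: "n \<le> m"
  shows "\<exists>U s V. orthonormal_cols m {..<n} U \<and> orthonormal_cols n {..<n} V \<and> (\<forall>j<n. 0 \<le> s j) \<and>
     (\<forall>a<m. \<forall>b<n. Y a b = udvt n U s V a b)"
proof -
  obtain Q lam where Q: "orthonormal_cols n {..<n} Q"
    and eig: "\<forall>j<n. \<forall>b<n. (\<Sum>b'<n. (\<Sum>a<m. Y a b * Y a b') * Q b' j) = lam j * Q b j"
    using symmetric_orthonormal_eigenvectors[of n "\<lambda>b b'. \<Sum>a<m. Y a b * Y a b'" n]
    by (auto simp: mult.commute)
  define w where "w j a = (\<Sum>b<n. Y a b * Q b j)" for j a
  obtain U where U: "orthonormal_cols m {..<n} U"
    and wU: "\<forall>j<n. 0 \<le> lam j \<and> (\<forall>a<m. w j a = U a j * sqrt (lam j))"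
    using orthogonal_vectors_normalize[OF nm, of w lam] gram_eigenvectors_orthogonal[OF Q eig]
    unfolding w_def by blast
  have "Y a b = udvt n U (\<lambda>j. sqrt (lam j)) Q a b" if a: "a < m" and b: "b < n" for a b
  proof -
    have "Y a b = (\<Sum>j<n. Q b j * (\<Sum>b'<n. Q b' j * Y a b'))"
      by (rule orthonormal_basis_expansion[OF Q b])
    also have "\<dots> = (\<Sum>j<n. Q b j * w j a)" unfolding w_def by (simp add: mult.commute)
    also have "\<dots> = udvt n U (\<lambda>j. sqrt (lam j)) Q a b"
      unfolding udvt_def using wU a by (intro sum.cong refl) (simp add: mult_ac)
    finally show ?thesis .
  qed
  with U Q wU show ?thesis by (intro exI[of _ U] exI[of _ "\<lambda>j. sqrt (lam j)"] exI[of _ Q]) auto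
qed

lemma sorting_permutation:
  fixes f :: "nat \<Rightarrow> real"
  shows "\<exists>\<pi>. bij_betw \<pi> {..<k} {..<k} \<and> (\<forall>i j. i \<le> j \<and> j < k \<longrightarrow> f (\<pi> i) \<le> f (\<pi> j))"
proof -
  define xs where "xs = sort_key f [0..<k]"
  have len: "length xs = k" unfolding xs_def by simp
  have "bij_betw ((!) xs) {..<k} {..<k}"
    by (rule bij_betw_nth) (simp_all add: xs_def atLeast0LessThan)
  moreover have "sorted (map f xs)" unfolding xs_def by (rule sorted_sort_key)
  then have "\<forall>i j. i \<le> j \<and> j < k \<longrightarrow> f (xs ! i) \<le> f (xs ! j)"
    using len unfolding sorted_iff_nth_mono by auto
  ultimately show ?thesis by blast
qed

lemma is_svd_sort:
  assumes U: "orthonormal_cols m {..<min m n} U" and V: "orthonormal_cols n {..<min m n} V"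
    and s0: "\<forall>j<min m n. 0 \<le> s j"
    and Y: "\<forall>a<m. \<forall>b<n. Y a b = udvt (min m n) U s V a b"
  shows "\<exists>\<pi>. bij_betw \<pi> {..<min m n} {..<min m n} \<and>
     is_svd m n Y (\<lambda>a j. U a (\<pi> j)) (\<lambda>j. s (\<pi> j)) (\<lambda>b j. V b (\<pi> j))"
proof -
  define k where "k = min m n"
  obtain \<pi> where \<pi>: "bij_betw \<pi> {..<k} {..<k}"
    and mono: "\<forall>i j. i \<le> j \<and> j < k \<longrightarrow> s (\<pi> i) \<le> s (\<pi> j)"
    using sorting_permutation[of k s] by blast
  have \<pi>k: "\<pi> j < k" if "j < k" for j using \<pi> that by (auto simp: bij_betw_def)
  have \<pi>_eq: "\<pi> i = \<pi> j \<longleftrightarrow> i = j" if "i < k" "j < k" for i j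
    using \<pi> that by (auto simp: bij_betw_def inj_on_def)
  have "udvt k (\<lambda>a j. U a (\<pi> j)) (\<lambda>j. s (\<pi> j)) (\<lambda>b j. V b (\<pi> j)) a b = udvt k U s V a b" for a b
    unfolding udvt_def by (rule sum.reindex_bij_betw[OF \<pi>, of "\<lambda>j. U a j * s j * V b j"])
  then have "is_svd m n Y (\<lambda>a j. U a (\<pi> j)) (\<lambda>j. s (\<pi> j)) (\<lambda>b j. V b (\<pi> j))"
    using U V s0 Y mono \<pi>k \<pi>_eq unfolding is_svd_iff_udvt orthonormal_cols_def k_def[symmetric]
    by auto
  with \<pi> show ?thesis unfolding k_def by blast
qed

lemma svd_exists: "\<exists>U s V. is_svd m n Y U s V"
proof -
  obtain U s V where "orthonormal_cols m {..<min m n} U" "orthonormal_cols n {..<min m n} V"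
    "\<forall>j<min m n. 0 \<le> s j" "\<forall>a<m. \<forall>b<n. Y a b = udvt (min m n) U s V a b"
  proof (cases "n \<le> m")
    case True
    then show ?thesis using svd_exists_tall[OF True, of Y] that by (auto simp: min_absorb2)
  next
    case False
    then obtain U s V where "orthonormal_cols n {..<m} U" "orthonormal_cols m {..<m} V"
      "\<forall>j<m. 0 \<le> s j" "\<forall>a<n. \<forall>b<m. Y b a = udvt m U s V a b"
      using svd_exists_tall[of m n "\<lambda>a b. Y b a"] by auto
    then show ?thesis using that[where U = V and V = U] False by (auto simp: min_absorb1 udvt_def mult_ac)
  qed
  from is_svd_sort[OF this] show ?thesis by blast
qed

lemma svd_singular_values_unique:
  assumes "is_svd m n Y U x V" and "is_svd m n Y U' y V'" and j: "j < min m n"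
  shows "x j = y j"
proof -
  have "(\<Sum>i<min m n. (x i - y i)\<^sup>2) \<le> 0" using svd_sum_sq_diff_le[OF assms(1,2)] by simp
  then have "(\<Sum>i<min m n. (x i - y i)\<^sup>2) = 0" by (simp add: antisym sum_nonneg)
  then show ?thesis using j by (simp add: sum_nonneg_eq_0_iff)
qed

lemma is_svd_sing_val: "\<exists>U V. is_svd m n Y U (sing_val m n Y) V"
proof -
  obtain U s V where "is_svd m n Y U s V" using svd_exists by blast
  then have "\<exists>s U V. is_svd m n Y U s V" by blast
  from someI_ex[OF this] show ?thesis unfolding sing_val_def .
qed

lemma sing_val_eq:
  assumes "is_svd m n Y U s V" and "j < min m n"
  shows "sing_val m n Y j = s j"
  using is_svd_sing_val svd_singular_values_unique assms by metis

section \<open>Weighted singular value thresholding\<close>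

definition wsp_prox_objective ::
  "nat \<Rightarrow> nat \<Rightarrow> real \<Rightarrow> (nat \<Rightarrow> real) \<Rightarrow> real \<Rightarrow> rmat \<Rightarrow> rmat \<Rightarrow> real" where
  "wsp_prox_objective m n \<tau> w p B Y =
     \<tau> * (\<Sum>j<min m n. w j * sing_val m n Y j powr p) + 1/2 * (\<Sum>a<m. \<Sum>b<n. (Y a b - B a b)\<^sup>2)"

lemma is_xp_selectionD:
  assumes "is_xp_selection p xp" and "0 \<le> \<sigma>" and "0 \<le> c"
  shows "0 \<le> xp \<sigma> c"
    and "0 \<le> x \<Longrightarrow> 1/2 * (xp \<sigma> c - \<sigma>)\<^sup>2 + c * xp \<sigma> c powr p \<le> 1/2 * (x - \<sigma>)\<^sup>2 + c * x powr p"
  using assms unfolding is_xp_selection_def by auto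

lemma wsp_prox_objective_lower_bound:
  assumes \<tau>: "0 \<le> \<tau>" and w0: "\<forall>j<min m n. 0 \<le> w j" and xp: "is_xp_selection p xp"
    and B: "is_svd m n B U s V"
  shows "(\<Sum>j<min m n. 1/2 * (xp (s j) (\<tau> * w j) - s j)\<^sup>2 + \<tau> * w j * xp (s j) (\<tau> * w j) powr p)
     \<le> wsp_prox_objective m n \<tau> w p B Y"
proof -
  define k where "k = min m n"
  define t where "t = sing_val m n Y"
  obtain U' V' where Y: "is_svd m n Y U' t V'" using is_svd_sing_val unfolding t_def by blast
  have "(\<Sum>j<k. 1/2 * (xp (s j) (\<tau> * w j) - s j)\<^sup>2 + \<tau> * w j * xp (s j) (\<tau> * w j) powr p)
      \<le> (\<Sum>j<k. 1/2 * (t j - s j)\<^sup>2 + \<tau> * w j * t j powr p)"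
    using Y B \<tau> w0 unfolding is_svd_def k_def
    by (intro sum_mono is_xp_selectionD(2)[OF xp]) auto
  also have "\<dots> = \<tau> * (\<Sum>j<k. w j * t j powr p) + 1/2 * (\<Sum>j<k. (t j - s j)\<^sup>2)"
    by (simp add: sum.distrib sum_distrib_left mult_ac)
  also have "\<dots> \<le> wsp_prox_objective m n \<tau> w p B Y"
    using svd_sum_sq_diff_le[OF Y B] unfolding wsp_prox_objective_def t_def k_def by simp
  finally show ?thesis unfolding k_def .
qed

lemma wsp_prox_objective_S_op:
  assumes \<tau>: "0 \<le> \<tau>" and p: "0 \<le> p" and w0: "\<forall>j<min m n. 0 \<le> w j"
    and w_mono: "\<forall>i j. i \<le> j \<and> j < min m n \<longrightarrow> w j \<le> w i"
    and xp: "is_xp_selection p xp" and B: "is_svd m n B U s V"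
  shows "wsp_prox_objective m n \<tau> w p B (S_op m n xp \<tau> w U s V)
     \<le> (\<Sum>j<min m n. 1/2 * (xp (s j) (\<tau> * w j) - s j)\<^sup>2 + \<tau> * w j * xp (s j) (\<tau> * w j) powr p)"
proof -
  define k where "k = min m n"
  define g where "g j = xp (s j) (\<tau> * w j)" for j
  define Z where "Z = S_op m n xp \<tau> w U s V"
  note B' = B[unfolded is_svd_iff_udvt k_def[symmetric]]
  have g0: "\<forall>j<k. 0 \<le> g j"
    using B' \<tau> w0 unfolding g_def k_def by (auto intro: is_xp_selectionD(1)[OF xp])
  obtain \<pi> where \<pi>: "bij_betw \<pi> {..<k} {..<k}"
    and Z: "is_svd m n Z (\<lambda>a j. U a (\<pi> j)) (\<lambda>j. g (\<pi> j)) (\<lambda>b j. V b (\<pi> j))"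
    using is_svd_sort[of m n U V g Z] B' g0
    unfolding Z_def S_op_eq_udvt g_def k_def by auto
  have "(\<Sum>j<k. w j * sing_val m n Z j powr p) = (\<Sum>j<k. w j * g (\<pi> j) powr p)"
    using sing_val_eq[OF Z] unfolding k_def by simp
  also have "\<dots> \<le> (\<Sum>j<k. w j * g j powr p)"
  proof (rule rearrangement_antitone_le[OF _ _ \<pi>, of w "\<lambda>j. g j powr p"])
    have "\<pi> j < k" if "j < k" for j using \<pi> that by (auto simp: bij_betw_def)
    then show "\<forall>i j. i \<le> j \<and> j < k \<longrightarrow> g (\<pi> i) powr p \<le> g (\<pi> j) powr p"
      using Z g0 p unfolding is_svd_def k_def by (auto intro!: powr_mono2)
  qed (use w_mono in \<open>auto simp: k_def\<close>)
  finally have penalty: "(\<Sum>j<k. w j * sing_val m n Z j powr p) \<le> (\<Sum>j<k. w j * g j powr p)" .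
  have "(\<Sum>a<m. \<Sum>b<n. (Z a b - B a b)\<^sup>2) =
      (\<Sum>a<m. \<Sum>b<n. udvt k U (\<lambda>j. g j - s j) V a b * udvt k U (\<lambda>j. g j - s j) V a b)"
    using B' unfolding Z_def S_op_eq_udvt g_def k_def
    by (intro sum.cong refl) (simp add: udvt_diff power2_eq_square)
  also have "\<dots> = (\<Sum>j<k. (g j - s j)\<^sup>2)"
    using B' by (simp add: udvt_inner_orthonormal power2_eq_square)
  finally have fit: "(\<Sum>a<m. \<Sum>b<n. (Z a b - B a b)\<^sup>2) = (\<Sum>j<k. (g j - s j)\<^sup>2)" .
  have "wsp_prox_objective m n \<tau> w p B Z \<le> \<tau> * (\<Sum>j<k. w j * g j powr p) + 1/2 * (\<Sum>j<k. (g j - s j)\<^sup>2)"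
    using penalty fit \<tau> unfolding wsp_prox_objective_def k_def by (simp add: mult_left_mono)
  also have "\<dots> = (\<Sum>j<k. 1/2 * (g j - s j)\<^sup>2 + \<tau> * w j * g j powr p)"
    by (simp add: sum.distrib sum_distrib_left mult_ac)
  finally show ?thesis unfolding Z_def g_def k_def .
qed

theorem S_op_minimizes_wsp_prox_objective:
  assumes "0 \<le> \<tau>" and "0 \<le> p" and "\<forall>j<min m n. 0 \<le> w j"
    and "\<forall>i j. i \<le> j \<and> j < min m n \<longrightarrow> w j \<le> w i"
    and "is_xp_selection p xp" and "is_svd m n B U s V"
  shows "wsp_prox_objective m n \<tau> w p B (S_op m n xp \<tau> w U s V) \<le> wsp_prox_objective m n \<tau> w p B Y"
  using wsp_prox_objective_S_op[OF assms] wsp_prox_objective_lower_bound[OF assms(1,3,5,6)]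
  by (rule order_trans)

section \<open>Orthogonal mode-3 transforms\<close>

lemma transform_diff:
  "transform n3 P (\<lambda>a b k. X a b k - A a b k) = (\<lambda>a b i. transform n3 P X a b i - transform n3 P A a b i)"
  unfolding transform_def by (simp add: right_diff_distrib sum_subtractf)

lemma transform_phibar_low: "i < r \<Longrightarrow> transform n3 (phibar r Phi Phic) X a b i = transform n3 Phi X a b i"
  unfolding transform_def phibar_def by simp

lemma transform_phibar_high: "transform n3 (phibar r Phi Phic) X a b (r + j) = transform n3 Phic X a b j"
  unfolding transform_def phibar_def by simp

lemma transform_transpose_inverse:
  assumes P: "orthonormal_cols n3 {..<n3} P" and j: "j < n3"
  shows "transform n3 P (transform n3 (mtranspose P) Z) a b j = Z a b j"
proof -
  have "transform n3 P (transform n3 (mtranspose P) Z) a b j = (\<Sum>k<n3. \<Sum>i<n3. P k j * P k i * Z a b i)"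
    unfolding transform_def mtranspose_def by (simp add: sum_distrib_left mult_ac)
  also have "\<dots> = (\<Sum>i<n3. (\<Sum>k<n3. P k j * P k i) * Z a b i)"
    by (subst sum.swap) (simp add: sum_distrib_right)
  also have "\<dots> = (\<Sum>i<n3. if i = j then Z a b j else 0)"
    using P j unfolding orthonormal_cols_def by (intro sum.cong refl) auto
  also have "\<dots> = Z a b j" using j by simp
  finally show ?thesis .
qed

lemma fro_sq_phibar_split:
  assumes P: "orthonormal_cols n3 {..<n3} (phibar r Phi Phic)" and r: "r \<le> n3"
  shows "fro_sq n1 n2 n3 D =
    (\<Sum>i<r. \<Sum>a<n1. \<Sum>b<n2. (slice (transform n3 Phi D) i a b)\<^sup>2) + fro_sq n1 n2 (n3 - r) (transform n3 Phic D)"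
proof -
  have "(\<Sum>k<n3. (D a b k)\<^sup>2) =
      (\<Sum>i<r. (transform n3 Phi D a b i)\<^sup>2) + (\<Sum>j<n3 - r. (transform n3 Phic D a b j)\<^sup>2)" for a b
  proof -
    have "(\<Sum>k<n3. (D a b k)\<^sup>2) = (\<Sum>i<n3. (transform n3 (phibar r Phi Phic) D a b i)\<^sup>2)"
      using orthonormal_basis_parseval[OF P, of "D a b"] unfolding transform_def by simp
    also have "\<dots> = (\<Sum>i<r. (transform n3 Phi D a b i)\<^sup>2) + (\<Sum>j<n3 - r. (transform n3 Phic D a b j)\<^sup>2)"
      using r by (simp add: sum_lessThan_split[OF r] transform_phibar_low transform_phibar_high)
    finally show ?thesis .
  qed
  then have "fro_sq n1 n2 n3 D = (\<Sum>a<n1. \<Sum>b<n2. \<Sum>i<r. (slice (transform n3 Phi D) i a b)\<^sup>2)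
      + fro_sq n1 n2 (n3 - r) (transform n3 Phic D)"
    unfolding fro_sq_def slice_def by (simp add: sum.distrib)
  also have "(\<Sum>a<n1. \<Sum>b<n2. \<Sum>i<r. (slice (transform n3 Phi D) i a b)\<^sup>2) =
      (\<Sum>i<r. \<Sum>a<n1. \<Sum>b<n2. (slice (transform n3 Phi D) i a b)\<^sup>2)"
    by (subst sum.swap) (rule sum.cong[OF refl], rule sum.swap)
  finally show ?thesis .
qed

lemma tensor_objective_split:
  assumes "orthonormal_cols n3 {..<n3} (phibar r Phi Phic)" and "r \<le> n3"
  shows "\<tau> * wsp_norm_pow n1 n2 n3 r Phi w p X + 1/2 * fro_sq n1 n2 n3 (\<lambda>a b k. X a b k - A a b k) =
    (\<Sum>i<r. wsp_prox_objective n1 n2 \<tau> w p (slice (transform n3 Phi A) i) (slice (transform n3 Phi X) i))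
    + 1/2 * fro_sq n1 n2 (n3 - r) (\<lambda>a b j. transform n3 Phic X a b j - transform n3 Phic A a b j)"
  using fro_sq_phibar_split[OF assms, of n1 n2 "\<lambda>a b k. X a b k - A a b k"]
  unfolding wsp_norm_pow_def wsp_prox_objective_def
  by (simp add: transform_diff slice_def sum.distrib sum_distrib_left algebra_simps)

section \<open>The tensor problem\<close>

theorem theorem1:
  fixes n1 n2 n3 r :: nat and A :: tensor and \<tau> p :: real and w :: "nat \<Rightarrow> real"
    and Phi Phic :: rmat and xp :: "real \<Rightarrow> real \<Rightarrow> real"
    and U V :: "nat \<Rightarrow> rmat" and s :: "nat \<Rightarrow> nat \<Rightarrow> real"
  assumes tau: "\<tau> > 0"
    and p: "0 < p" "p \<le> 1"
    and w_mono: "\<forall>i j. i \<le> j \<and> j < min n1 n2 \<longrightarrow> w j \<le> w i"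
    and w_nonneg: "\<forall>j<min n1 n2. 0 \<le> w j"
    and r_le: "r \<le> n3"
    and Phi_semi: "\<forall>i<r. \<forall>j<r. (\<Sum>k<n3. Phi k i * Phi k j) = (if i = j then 1 else 0)"
    and Phibar_orth: "\<forall>i<n3. \<forall>j<n3.
          (\<Sum>k<n3. phibar r Phi Phic k i * phibar r Phi Phic k j) = (if i = j then 1 else 0)"
    and xp: "is_xp_selection p xp"
    and svd: "\<forall>i<r. is_svd n1 n2 (slice (transform n3 Phi A) i) (U i) (s i) (V i)"
  shows
    "let Z = (\<lambda>a b i. if i < r then S_op n1 n2 xp \<tau> w (U i) (s i) (V i) a b
                      else transform n3 Phic A a b (i - r));
         Xstar = transform n3 (mtranspose (phibar r Phi Phic)) Z;
         F = (\<lambda>X. \<tau> * wsp_norm_pow n1 n2 n3 r Phi w p X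
                   + (1/2) * fro_sq n1 n2 n3 (\<lambda>a b k. X a b k - A a b k))
     in \<forall>X. F Xstar \<le> F X"
proof -
  \<comment> \<open>\<open>Phi_semi\<close> is implied by \<open>Phibar_orth\<close>, and only \<open>0 \<le> p\<close> is needed.\<close>
  define Pb where "Pb = phibar r Phi Phic"
  define Z where "Z = (\<lambda>a b i. if i < r then S_op n1 n2 xp \<tau> w (U i) (s i) (V i) a b
                      else transform n3 Phic A a b (i - r))"
  define Xstar where "Xstar = transform n3 (mtranspose Pb) Z"
  define G where "G X = (\<Sum>i<r. wsp_prox_objective n1 n2 \<tau> w p
      (slice (transform n3 Phi A) i) (slice (transform n3 Phi X) i))" for X
  define R where "R X = fro_sq n1 n2 (n3 - r) (\<lambda>a b j. transform n3 Phic X a b j - transform n3 Phic A a b j)"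
    for X
  have Pb: "orthonormal_cols n3 {..<n3} Pb" using Phibar_orth unfolding orthonormal_cols_def Pb_def by auto
  have split: "\<tau> * wsp_norm_pow n1 n2 n3 r Phi w p X + 1/2 * fro_sq n1 n2 n3 (\<lambda>a b k. X a b k - A a b k)
      = G X + 1/2 * R X" for X
    unfolding G_def R_def by (rule tensor_objective_split[OF Pb[unfolded Pb_def] r_le])
  have Xstar: "transform n3 Pb Xstar a b k = Z a b k" if "k < n3" for a b k
    using transform_transpose_inverse[OF Pb that] unfolding Xstar_def .
  have "slice (transform n3 Phi Xstar) i = S_op n1 n2 xp \<tau> w (U i) (s i) (V i)" if "i < r" for i
    using Xstar[of i] transform_phibar_low[OF that] that r_le unfolding slice_def Z_def Pb_def by auto
  then have G: "G Xstar \<le> G X" for X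
    unfolding G_def using tau p(1) w_nonneg w_mono xp svd
    by (intro sum_mono) (simp add: S_op_minimizes_wsp_prox_objective)
  have R0: "R Xstar = 0"
    using Xstar[of "r + _"] unfolding R_def fro_sq_def Z_def Pb_def transform_phibar_high by simp
  have R_nonneg: "0 \<le> R X" for X unfolding R_def fro_sq_def by (intro sum_nonneg) auto
  have "G Xstar + 1/2 * R Xstar \<le> G X + 1/2 * R X" for X
    using G[of X] R0 R_nonneg[of X] by simp
  then show ?thesis unfolding Let_def split Xstar_def Z_def Pb_def by blast
qed

end
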